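(* Let $\mathcal{P}$ denote the family of pdCGs with vertex set $V$. The map sending a pdCG $\mathcal{G}=(\mathcal{V},\mathcal{E})$ to the quadruplet $(V,E,\mathbb{L},\mathbb{E})$, where $E$ is the union of the edge colour classes of $\mathcal{G}$, $\mathbb{L}=\{i\in L\mid \{i\}\in\mathcal{V}\}$ and $\mathbb{E}=\{(i,j)\in E_L\cap\tau(E_R)\mid \{(i,j)\}\in\mathcal{E}\}$ (with $E_L=E\cap F_L$, $E_R=E\cap F_R$), is a one-to-one correspondence between $\mathcal{P}$ and the collection of quadruplets $(V,E,\mathbb{L},\mathbb{E})$ that are compatible with $(L,R)$.
   Context: Let $V=\{1,\dots,p\}$ and let $\tau:V\to V$ be a twin-pairing function: $\tau(i)=j$ implies $\tau(j)=i$, and there is a partition $V=L\cup R$, $L\cap R=\emptyset$, with $\tau(L)=R$. The vertices are numbered so that $L=\{1,\dots,q\}$ and $R=\{q+1,\dots,p\}$. Let $F_V=\{(i,j)\mid i,j\in V,\ i<j\}$. Extend $\tau$ to edges by $\tau(i,j)=(\tau(i),\tau(j))$, with endpoints reordered if necessary so that it lies in $F_V$, and to sets elementwise. Define $F_L=\{(i,j)\in F_V\mid i<\tau(j)\}$ and $F_R=\{(i,j)\in F_V\mid i>\tau(j)\}$. A coloured graph with vertex set $V$ is a pair $(\mathcal{V},\mathcal{E})$ where $\mathcal{V}$ is a partition of $V$ and $\mathcal{E}$ is a partition of an edge set $E\subseteq F_V$. A colour class is atomic if it has one element, and twin-pairing if it is $\{i,\tau(i)\}$ or $\{(i,j),\tau(i,j)\}$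 with $(i,j)\neq\tau(i,j)$. A pdCG is a coloured graph all of whose colour classes are atomic or twin-pairing. For an undirected graph $(V,E)$ with $E\subseteq F_V$, a quadruplet $(V,E,\mathbb{L},\mathbb{E})$ is compatible with $(L,R)$ if $\mathbb{L}\subseteq L$ and $\mathbb{E}\subseteq E_L\cap\tau(E_R)$, where $E_L=E\cap F_L$, $E_R=E\cap F_R$. *)

theory Defs
  imports "HOL-Library.Disjoint_Sets"
begin

type_synonym edge = "nat \<times> nat"

definition FV :: "nat \<Rightarrow> edge set" where
  "FV p = {(i,j). i \<in> {1..p} \<and> j \<in> {1..p} \<and> i < j}"

text \<open>Extension of tau to edges, endpoints reordered so the result lies in F_V.\<close>
definition tau_edge :: "(nat \<Rightarrow> nat) \<Rightarrow> edge \<Rightarrow> edge" where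
  "tau_edge \<tau> e = (min (\<tau> (fst e)) (\<tau> (snd e)), max (\<tau> (fst e)) (\<tau> (snd e)))"

definition FL :: "nat \<Rightarrow> (nat \<Rightarrow> nat) \<Rightarrow> edge set" where
  "FL p \<tau> = {(i,j) \<in> FV p. i < \<tau> j}"

definition FR :: "nat \<Rightarrow> (nat \<Rightarrow> nat) \<Rightarrow> edge set" where
  "FR p \<tau> = {(i,j) \<in> FV p. i > \<tau> j}"

definition coloured_graph :: "nat \<Rightarrow> nat set set \<Rightarrow> edge set set \<Rightarrow> bool" where
  "coloured_graph p VV EE \<longleftrightarrow>
     partition_on {1..p} VV \<and> (\<exists>E. E \<subseteq> FV p \<and> partition_on E EE)"

definition atomic_class :: "'a set \<Rightarrow> bool" where
  "atomic_class C \<longleftrightarrow> (\<exists>x. C = {x})"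

definition twin_vertex_class :: "(nat \<Rightarrow> nat) \<Rightarrow> nat set \<Rightarrow> bool" where
  "twin_vertex_class \<tau> C \<longleftrightarrow> (\<exists>i. C = {i, \<tau> i})"

definition twin_edge_class :: "(nat \<Rightarrow> nat) \<Rightarrow> edge set \<Rightarrow> bool" where
  "twin_edge_class \<tau> C \<longleftrightarrow> (\<exists>e. C = {e, tau_edge \<tau> e} \<and> e \<noteq> tau_edge \<tau> e)"

definition pdCG :: "nat \<Rightarrow> (nat \<Rightarrow> nat) \<Rightarrow> nat set set \<Rightarrow> edge set set \<Rightarrow> bool" where
  "pdCG p \<tau> VV EE \<longleftrightarrow> coloured_graph p VV EE
     \<and> (\<forall>C\<in>VV. atomic_class C \<or> twin_vertex_class \<tau> C)
     \<and> (\<forall>C\<in>EE. atomic_class C \<or> twin_edge_class \<tau> C)"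

definition pdCGs :: "nat \<Rightarrow> (nat \<Rightarrow> nat) \<Rightarrow> (nat set set \<times> edge set set) set" where
  "pdCGs p \<tau> = {(VV, EE). pdCG p \<tau> VV EE}"

definition compatible_quads ::
  "nat \<Rightarrow> nat \<Rightarrow> (nat \<Rightarrow> nat) \<Rightarrow> (nat set \<times> edge set \<times> nat set \<times> edge set) set" where
  "compatible_quads p q \<tau> = {(V, E, LL, EE). V = {1..p} \<and> E \<subseteq> FV p \<and> LL \<subseteq> {1..q}
      \<and> EE \<subseteq> (E \<inter> FL p \<tau>) \<inter> tau_edge \<tau> ` (E \<inter> FR p \<tau>)}"

definition quad_of ::
  "nat \<Rightarrow> nat \<Rightarrow> (nat \<Rightarrow> nat) \<Rightarrow> nat set set \<times> edge set set \<Rightarrow> nat set \<times> edge set \<times> nat set \<times> edge set" where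
  "quad_of p q \<tau> G = (let VV = fst G; EC = snd G; E = \<Union>EC in
     ({1..p}, E, {i \<in> {1..q}. {i} \<in> VV},
      {e \<in> (E \<inter> FL p \<tau>) \<inter> tau_edge \<tau> ` (E \<inter> FR p \<tau>). {e} \<in> EC}))"

end

theory Submission imports Defs begin

(* The vertex and the edge colouring of a pdCG are both partitions of a set X into singletons and
   twin pairs {x, \<sigma> x}, for an involution \<sigma>. Such a partition is determined by its set U of
   singleton points, and U may be any subset of X whose complement is \<sigma>-closed and free of fixed
   points. Given a transversal R of the two-element \<sigma>-orbits, U is in turn determined by U \<inter> R,
   which is an arbitrary subset of R. For the vertices take \<sigma> = \<tau>, X = V, R = L; for the edges
   take \<sigma> = \<tau> on edges, X = E, R = E_L \<inter> \<tau>(E_R). The quadruplet records E and the two sets U \<inter> R.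
*)

lemma partition_on_image_classes:
  assumes self: "\<And>x. x \<in> A \<Longrightarrow> x \<in> c x"
    and closed: "\<And>x y. x \<in> A \<Longrightarrow> y \<in> c x \<Longrightarrow> y \<in> A \<and> c y = c x"
  shows "partition_on A (c ` A)"
proof (rule partition_onI)
  show "\<Union>(c ` A) = A" using self closed by blast
  show "{} \<notin> c ` A" using self by blast
  fix C D assume "C \<in> c ` A" "D \<in> c ` A" "C \<noteq> D"
  then show "disjnt C D" using closed unfolding disjnt_def by blast
qed

lemma partition_on_class_unique:
  "partition_on A P \<Longrightarrow> C \<in> P \<Longrightarrow> D \<in> P \<Longrightarrow> x \<in> C \<Longrightarrow> x \<in> D \<Longrightarrow> C = D"
  using partition_onD2 disjointD by blast

definition twin_partition :: "('a \<Rightarrow> 'a) \<Rightarrow> 'a set \<Rightarrow> 'a set set \<Rightarrow> bool" where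
  "twin_partition \<sigma> X P \<longleftrightarrow> partition_on X P \<and> (\<forall>C\<in>P. \<exists>x. C = {x} \<or> C = {x, \<sigma> x})"

lemma Union_twin_partition: "twin_partition \<sigma> X P \<Longrightarrow> \<Union>P = X"
  by (simp add: twin_partition_def partition_on_def)

definition singletons :: "'a set set \<Rightarrow> 'a set" where
  "singletons P = {x. {x} \<in> P}"

definition twin_classes :: "('a \<Rightarrow> 'a) \<Rightarrow> 'a set \<Rightarrow> 'a set \<Rightarrow> 'a set set" where
  "twin_classes \<sigma> X U = (\<lambda>x. if x \<in> U then {x} else {x, \<sigma> x}) ` X"

definition admissible_singletons :: "('a \<Rightarrow> 'a) \<Rightarrow> 'a set \<Rightarrow> 'a set \<Rightarrow> bool" where
  "admissible_singletons \<sigma> X U \<longleftrightarrow> U \<subseteq> X \<and> (\<forall>x \<in> X - U. \<sigma> x \<in> X - U \<and> \<sigma> x \<noteq> x)"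

locale involution_on =
  fixes \<sigma> :: "'a \<Rightarrow> 'a" and X :: "'a set"
  assumes involutive: "x \<in> X \<Longrightarrow> \<sigma> (\<sigma> x) = x"
begin

lemma inj_on_involution: "inj_on \<sigma> X"
  by (metis inj_onI involutive)

lemma twin_partition_class:
  assumes P: "twin_partition \<sigma> X P" and "C \<in> P" "x \<in> C"
  shows "C = {x} \<or> (C = {x, \<sigma> x} \<and> \<sigma> x \<noteq> x)"
proof -
  have "C \<subseteq> X" using P \<open>C \<in> P\<close> partition_onD1 unfolding twin_partition_def by blast
  moreover obtain y where "C = {y} \<or> C = {y, \<sigma> y}"
    using P \<open>C \<in> P\<close> unfolding twin_partition_def by blast
  ultimately show ?thesis using \<open>x \<in> C\<close> involutive by auto
qed

lemma twin_partition_class_eq: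
  assumes P: "twin_partition \<sigma> X P" and "C \<in> P" "x \<in> C"
  shows "C = (if x \<in> singletons P then {x} else {x, \<sigma> x})"
proof (cases "x \<in> singletons P")
  case True
  then have "{x} \<in> P" by (simp add: singletons_def)
  then show ?thesis
    using True P partition_on_class_unique[of X P C "{x}" x] assms(2,3)
    unfolding twin_partition_def by auto
next
  case False
  then show ?thesis
    using twin_partition_class[OF assms] assms(2) by (auto simp: singletons_def)
qed

lemma twin_partition_eq_twin_classes:
  assumes P: "twin_partition \<sigma> X P"
  shows "P = twin_classes \<sigma> X (singletons P)"
proof -
  have part: "partition_on X P" using P by (simp add: twin_partition_def)
  have "C \<in> twin_classes \<sigma> X (singletons P)" if "C \<in> P" for C
  proof -
    obtain x where "x \<in> C" using partition_onD3[OF part] \<open>C \<in> P\<close> by (metis ex_in_conv)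
    moreover have "x \<in> X" using partition_onD1[OF part] \<open>C \<in> P\<close> \<open>x \<in> C\<close> by blast
    ultimately show ?thesis
      using twin_partition_class_eq[OF P \<open>C \<in> P\<close>] unfolding twin_classes_def by blast
  qed
  moreover have "C \<in> P" if C_class: "C \<in> twin_classes \<sigma> X (singletons P)" for C
  proof -
    obtain x where "x \<in> X" and C: "C = (if x \<in> singletons P then {x} else {x, \<sigma> x})"
      using C_class unfolding twin_classes_def by blast
    then obtain D where "D \<in> P" "x \<in> D" using partition_onD1[OF part] by blast
    then show ?thesis using twin_partition_class_eq[OF P] C by metis
  qed
  ultimately show ?thesis by blast
qed

lemma admissible_singletons_of_twin_partition:
  assumes P: "twin_partition \<sigma> X P"
  shows "admissible_singletons \<sigma> X (singletons P)"
proof -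
  have part: "partition_on X P" using P by (simp add: twin_partition_def)
  have "\<sigma> x \<in> X - singletons P \<and> \<sigma> x \<noteq> x" if x: "x \<in> X - singletons P" for x
  proof -
    obtain C where C: "C \<in> P" "x \<in> C" using partition_onD1[OF part] x by blast
    then have C_eq: "C = {x, \<sigma> x}" "\<sigma> x \<noteq> x"
      using twin_partition_class[OF P C] x by (auto simp: singletons_def)
    have "\<sigma> x \<notin> singletons P"
      using partition_on_class_unique[OF part C(1), of "{\<sigma> x}" "\<sigma> x"] C_eq
      by (auto simp: singletons_def)
    moreover have "\<sigma> x \<in> X" using partition_onD1[OF part] C C_eq by blast
    ultimately show ?thesis using C_eq by blast
  qed
  moreover have "singletons P \<subseteq> X" using partition_onD1[OF part] by (fastforce simp: singletons_def)
  ultimately show ?thesis unfolding admissible_singletons_def by blast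
qed

context
  fixes U assumes U: "admissible_singletons \<sigma> X U"
begin

lemma twin_partition_twin_classes: "twin_partition \<sigma> X (twin_classes \<sigma> X U)"
proof -
  let ?c = "\<lambda>x. if x \<in> U then {x} else {x, \<sigma> x}"
  have closed: "y \<in> X \<and> ?c y = ?c x" if x: "x \<in> X" and y: "y \<in> ?c x" for x y
  proof (cases "y = x")
    case False
    then have "x \<notin> U" "y = \<sigma> x" using y by (auto split: if_splits)
    moreover have "\<sigma> y = x" using \<open>y = \<sigma> x\<close> involutive x by blast
    ultimately show ?thesis using U x unfolding admissible_singletons_def by auto
  qed (simp add: x)
  have "partition_on X (?c ` X)" by (rule partition_on_image_classes) (simp, fact closed)
  then show ?thesis unfolding twin_partition_def twin_classes_def by auto
qed

lemma singletons_twin_classes: "singletons (twin_classes \<sigma> X U) = U"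
  using U unfolding admissible_singletons_def singletons_def twin_classes_def
  by (auto simp: doubleton_eq_iff)

end

end

definition pairable :: "('a \<Rightarrow> 'a) \<Rightarrow> 'a set \<Rightarrow> 'a set" where
  "pairable \<sigma> X = {x \<in> X. \<sigma> x \<in> X \<and> \<sigma> x \<noteq> x}"

definition twin_partition_of :: "('a \<Rightarrow> 'a) \<Rightarrow> 'a set \<Rightarrow> 'a set \<Rightarrow> 'a set set" where
  "twin_partition_of \<sigma> X S = twin_classes \<sigma> X (S \<union> \<sigma> ` S \<union> (X - pairable \<sigma> X))"

locale twin_transversal = involution_on +
  fixes R :: "'a set"
  assumes transversal_pairable: "R \<subseteq> pairable \<sigma> X"
    and transversal_disjoint: "R \<inter> \<sigma> ` R = {}"
    and transversal_covers: "pairable \<sigma> X \<subseteq> R \<union> \<sigma> ` R"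
begin

lemma admissible_singletons_lift:
  assumes "S \<subseteq> R"
  shows "admissible_singletons \<sigma> X (S \<union> \<sigma> ` S \<union> (X - pairable \<sigma> X))"
  using assms transversal_pairable involutive inj_on_involution
  unfolding admissible_singletons_def pairable_def by (auto 4 4 simp: image_iff inj_on_eq_iff)

lemma admissible_singletons_eq_lift:
  assumes "admissible_singletons \<sigma> X U"
  shows "U = (U \<inter> R) \<union> \<sigma> ` (U \<inter> R) \<union> (X - pairable \<sigma> X)"
proof -
  have U: "U \<subseteq> X" and outside: "\<And>x. x \<in> X - U \<Longrightarrow> \<sigma> x \<in> X - U \<and> \<sigma> x \<noteq> x"
    using assms unfolding admissible_singletons_def by auto
  have closed: "\<sigma> x \<in> U" if "x \<in> U" "\<sigma> x \<in> X" for x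
    using outside[of "\<sigma> x"] involutive[of x] that U by (metis Diff_iff subsetD)
  show ?thesis
  proof (intro equalityI subsetI)
    fix x assume "x \<in> U"
    show "x \<in> (U \<inter> R) \<union> \<sigma> ` (U \<inter> R) \<union> (X - pairable \<sigma> X)"
    proof (cases "x \<in> pairable \<sigma> X")
      case True
      then consider "x \<in> R" | r where "r \<in> R" "x = \<sigma> r" using transversal_covers by blast
      then show ?thesis
      proof cases
        case 2
        then have "r \<in> X" using transversal_pairable by (auto simp: pairable_def)
        then have "r \<in> U" using closed[of x] \<open>x \<in> U\<close> 2 involutive by auto
        then show ?thesis using 2 by blast
      qed (use \<open>x \<in> U\<close> in blast)
    qed (use \<open>x \<in> U\<close> U in blast)
  next
    fix x assume "x \<in> (U \<inter> R) \<union> \<sigma> ` (U \<inter> R) \<union> (X - pairable \<sigma> X)"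
    then show "x \<in> U"
      using closed outside transversal_pairable unfolding pairable_def by blast
  qed
qed

lemma twin_partition_twin_partition_of:
  "S \<subseteq> R \<Longrightarrow> twin_partition \<sigma> X (twin_partition_of \<sigma> X S)"
  unfolding twin_partition_of_def by (rule twin_partition_twin_classes[OF admissible_singletons_lift])

lemma singletons_twin_partition_of:
  assumes "S \<subseteq> R"
  shows "singletons (twin_partition_of \<sigma> X S) \<inter> R = S"
proof -
  have "singletons (twin_partition_of \<sigma> X S) = S \<union> \<sigma> ` S \<union> (X - pairable \<sigma> X)"
    unfolding twin_partition_of_def
    by (rule singletons_twin_classes[OF admissible_singletons_lift[OF assms]])
  then show ?thesis using assms transversal_disjoint transversal_pairable by blast
qed

lemma twin_partition_of_singletons:
  "twin_partition \<sigma> X P \<Longrightarrow> twin_partition_of \<sigma> X (singletons P \<inter> R) = P"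
  unfolding twin_partition_of_def
  using admissible_singletons_eq_lift[OF admissible_singletons_of_twin_partition]
    twin_partition_eq_twin_classes by metis

end

definition left_edges :: "nat \<Rightarrow> (nat \<Rightarrow> nat) \<Rightarrow> edge set \<Rightarrow> edge set" where
  "left_edges p \<tau> E = E \<inter> FL p \<tau> \<inter> tau_edge \<tau> ` (E \<inter> FR p \<tau>)"

lemma pdCG_iff_twin_partitions:
  "pdCG p \<tau> VV EC \<longleftrightarrow>
     twin_partition \<tau> {1..p} VV \<and> \<Union>EC \<subseteq> FV p \<and> twin_partition (tau_edge \<tau>) (\<Union>EC) EC"
proof -
  have vertex_classes:
    "atomic_class C \<or> twin_vertex_class \<tau> C \<longleftrightarrow> (\<exists>i. C = {i} \<or> C = {i, \<tau> i})" for C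
    by (auto simp: atomic_class_def twin_vertex_class_def)
  have edge_classes:
    "atomic_class C \<or> twin_edge_class \<tau> C \<longleftrightarrow> (\<exists>e. C = {e} \<or> C = {e, tau_edge \<tau> e})" for C
    unfolding atomic_class_def twin_edge_class_def by (metis insert_absorb2)
  have edge_set:
    "(\<exists>E. E \<subseteq> FV p \<and> partition_on E EC) \<longleftrightarrow> \<Union>EC \<subseteq> FV p \<and> partition_on (\<Union>EC) EC"
    by (metis partition_onD1)
  show ?thesis
    unfolding pdCG_def coloured_graph_def twin_partition_def vertex_classes edge_classes edge_set
    by blast
qed

lemma quad_of_eq:
  "quad_of p q \<tau> (VV, EC) =
     ({1..p}, \<Union>EC, singletons VV \<inter> {1..q}, singletons EC \<inter> left_edges p \<tau> (\<Union>EC))"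
  by (auto simp: quad_of_def singletons_def left_edges_def Let_def)

lemma compatible_quads_iff:
  "(V, E, LL, S) \<in> compatible_quads p q \<tau> \<longleftrightarrow>
     V = {1..p} \<and> E \<subseteq> FV p \<and> LL \<subseteq> {1..q} \<and> S \<subseteq> left_edges p \<tau> E"
  by (simp add: compatible_quads_def left_edges_def)

lemma quad_of_compatible: "G \<in> pdCGs p \<tau> \<Longrightarrow> quad_of p q \<tau> G \<in> compatible_quads p q \<tau>"
  by (auto simp: pdCGs_def pdCG_iff_twin_partitions quad_of_eq compatible_quads_iff)

definition pdCG_of_quad ::
  "nat \<Rightarrow> (nat \<Rightarrow> nat) \<Rightarrow> nat set \<times> edge set \<times> nat set \<times> edge set \<Rightarrow> nat set set \<times> edge set set" where
  "pdCG_of_quad p \<tau> Q = (case Q of (V, E, LL, S) \<Rightarrow>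
     (twin_partition_of \<tau> {1..p} LL, twin_partition_of (tau_edge \<tau>) E S))"

locale twin_pairing =
  fixes p q :: nat and \<tau> :: "nat \<Rightarrow> nat"
  assumes q_le_p: "q \<le> p"
    and tau_range: "\<forall>i\<in>{1..p}. \<tau> i \<in> {1..p}"
    and tau_involutive: "\<forall>i\<in>{1..p}. \<tau> (\<tau> i) = i"
    and tau_left: "\<tau> ` {1..q} = {q+1..p}"
begin

lemma tau_le_iff:
  assumes "i \<in> {1..p}"
  shows "\<tau> i \<le> q \<longleftrightarrow> q < i"
proof (cases "i \<le> q")
  case True
  then have "\<tau> i \<in> {q+1..p}" using tau_left assms by auto
  then show ?thesis using True by auto
next
  case False
  then have "i \<in> \<tau> ` {1..q}" using tau_left assms by auto
  then obtain j where "j \<in> {1..q}" "i = \<tau> j" by blast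
  then show ?thesis using False q_le_p tau_involutive by auto
qed

lemma vertex_twin_transversal: "twin_transversal \<tau> {1..p} {1..q}"
proof
  show "\<tau> (\<tau> i) = i" if "i \<in> {1..p}" for i using that tau_involutive by blast
  show "{1..q} \<subseteq> pairable \<tau> {1..p}"
    using q_le_p tau_range tau_le_iff by (fastforce simp: pairable_def)
  show "{1..q} \<inter> \<tau> ` {1..q} = {}" "pairable \<tau> {1..p} \<subseteq> {1..q} \<union> \<tau> ` {1..q}"
    using tau_left by (auto simp: pairable_def)
qed

lemma tau_edge_FV:
  assumes "e \<in> FV p"
  shows "tau_edge \<tau> e \<in> FV p"
proof -
  obtain i j where e: "e = (i, j)" "i \<in> {1..p}" "j \<in> {1..p}" "i < j"
    using assms by (auto simp: FV_def)
  then have "\<tau> i \<noteq> \<tau> j" using tau_involutive by (metis less_irrefl)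
  then show ?thesis using e tau_range by (auto simp: FV_def tau_edge_def min_def max_def)
qed

lemma tau_edge_involutive: "e \<in> FV p \<Longrightarrow> tau_edge \<tau> (tau_edge \<tau> e) = e"
  using tau_involutive by (cases e) (auto simp: FV_def tau_edge_def min_def max_def)

lemma tau_edge_FR_iff:
  assumes "e \<in> FV p"
  shows "tau_edge \<tau> e \<in> FR p \<tau> \<longleftrightarrow> e \<in> FL p \<tau>"
proof -
  obtain i j where e: "e = (i, j)" "i \<in> {1..p}" "j \<in> {1..p}" "i < j"
    using assms by (auto simp: FV_def)
  show ?thesis
    using tau_le_iff[of i] tau_le_iff[of j] tau_involutive tau_edge_FV[OF assms] assms e
    by (auto simp: FL_def FR_def tau_edge_def min_def max_def)
qed

lemma tau_edge_FL_iff: "e \<in> FV p \<Longrightarrow> tau_edge \<tau> e \<in> FL p \<tau> \<longleftrightarrow> e \<in> FR p \<tau>"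
  using tau_edge_FR_iff[of "tau_edge \<tau> e"] tau_edge_FV tau_edge_involutive by metis

lemma tau_edge_fixed: "e \<in> FV p \<Longrightarrow> e \<notin> FL p \<tau> \<Longrightarrow> e \<notin> FR p \<tau> \<Longrightarrow> tau_edge \<tau> e = e"
  using tau_involutive by (cases e) (auto simp: FV_def FL_def FR_def tau_edge_def)

lemma edge_twin_transversal:
  assumes E: "E \<subseteq> FV p"
  shows "twin_transversal (tau_edge \<tau>) E (left_edges p \<tau> E)"
proof
  have FL_FR: "FL p \<tau> \<inter> FR p \<tau> = {}" by (auto simp: FL_def FR_def)
  show "tau_edge \<tau> (tau_edge \<tau> e) = e" if "e \<in> E" for e
    using that E tau_edge_involutive by blast
  show "left_edges p \<tau> E \<subseteq> pairable (tau_edge \<tau>) E"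
    using E FL_FR tau_edge_FR_iff tau_edge_involutive
    unfolding left_edges_def pairable_def by fastforce
  have "left_edges p \<tau> E \<subseteq> FL p \<tau>" unfolding left_edges_def by blast
  moreover have "tau_edge \<tau> ` left_edges p \<tau> E \<subseteq> FR p \<tau>"
    using E tau_edge_FR_iff unfolding left_edges_def by blast
  ultimately show "left_edges p \<tau> E \<inter> tau_edge \<tau> ` left_edges p \<tau> E = {}"
    using FL_FR by blast
  show "pairable (tau_edge \<tau>) E \<subseteq> left_edges p \<tau> E \<union> tau_edge \<tau> ` left_edges p \<tau> E"
  proof
    fix e assume "e \<in> pairable (tau_edge \<tau>) E"
    then have e: "e \<in> E" "tau_edge \<tau> e \<in> E" "tau_edge \<tau> e \<noteq> e" by (simp_all add: pairable_def)
    have e_FV: "e \<in> FV p" using e E by blast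
    then have twice: "tau_edge \<tau> (tau_edge \<tau> e) = e" by (rule tau_edge_involutive)
    have "e \<in> FL p \<tau> \<or> e \<in> FR p \<tau>" using tau_edge_fixed e_FV e(3) by blast
    then show "e \<in> left_edges p \<tau> E \<union> tau_edge \<tau> ` left_edges p \<tau> E"
    proof
      assume "e \<in> FL p \<tau>"
      then have "tau_edge \<tau> e \<in> E \<inter> FR p \<tau>" using tau_edge_FR_iff e_FV e(2) by blast
      then have "e \<in> left_edges p \<tau> E"
        using \<open>e \<in> FL p \<tau>\<close> e(1) twice unfolding left_edges_def by (metis IntI imageI)
      then show ?thesis by blast
    next
      assume "e \<in> FR p \<tau>"
      then have "tau_edge \<tau> e \<in> left_edges p \<tau> E"
        using tau_edge_FL_iff e_FV e unfolding left_edges_def by blast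
      then show ?thesis using twice by (metis UnI2 imageI)
    qed
  qed
qed

lemma pdCG_of_quad_of:
  assumes "G \<in> pdCGs p \<tau>"
  shows "pdCG_of_quad p \<tau> (quad_of p q \<tau> G) = G"
proof -
  obtain VV EC where G: "G = (VV, EC)" "twin_partition \<tau> {1..p} VV" "\<Union>EC \<subseteq> FV p"
      "twin_partition (tau_edge \<tau>) (\<Union>EC) EC"
    using assms by (auto simp: pdCGs_def pdCG_iff_twin_partitions)
  show ?thesis
    using twin_transversal.twin_partition_of_singletons[OF vertex_twin_transversal G(2)]
      twin_transversal.twin_partition_of_singletons[OF edge_twin_transversal[OF G(3)] G(4)]
    by (simp add: G(1) quad_of_eq pdCG_of_quad_def)
qed

context
  fixes E LL S
  assumes E: "E \<subseteq> FV p" and LL: "LL \<subseteq> {1..q}" and S: "S \<subseteq> left_edges p \<tau> E"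
begin

interpretation vertices: twin_transversal \<tau> "{1..p}" "{1..q}"
  by (rule vertex_twin_transversal)

interpretation edges: twin_transversal "tau_edge \<tau>" E "left_edges p \<tau> E"
  using E by (rule edge_twin_transversal)

lemma pdCG_of_quad_pdCG: "pdCG_of_quad p \<tau> ({1..p}, E, LL, S) \<in> pdCGs p \<tau>"
  using vertices.twin_partition_twin_partition_of[OF LL] edges.twin_partition_twin_partition_of[OF S]
    Union_twin_partition[OF edges.twin_partition_twin_partition_of[OF S]] E
  by (simp add: pdCGs_def pdCG_iff_twin_partitions pdCG_of_quad_def)

lemma quad_of_pdCG_of_quad: "quad_of p q \<tau> (pdCG_of_quad p \<tau> ({1..p}, E, LL, S)) = ({1..p}, E, LL, S)"
  using vertices.singletons_twin_partition_of[OF LL] edges.singletons_twin_partition_of[OF S]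
    Union_twin_partition[OF edges.twin_partition_twin_partition_of[OF S]]
  by (simp add: quad_of_eq pdCG_of_quad_def)

end

end

theorem theorem4:
  fixes p q :: nat and \<tau> :: "nat \<Rightarrow> nat"
  assumes "q \<le> p"
    and "\<forall>i\<in>{1..p}. \<tau> i \<in> {1..p}"
    and "\<forall>i\<in>{1..p}. \<tau> (\<tau> i) = i"
    and "\<tau> ` {1..q} = {q+1..p}"
  shows "bij_betw (quad_of p q \<tau>) (pdCGs p \<tau>) (compatible_quads p q \<tau>)"
proof (rule bij_betw_byWitness[where f' = "pdCG_of_quad p \<tau>"])
  interpret twin_pairing p q \<tau> using assms by unfold_locales
  show "\<forall>G\<in>pdCGs p \<tau>. pdCG_of_quad p \<tau> (quad_of p q \<tau> G) = G"
    using pdCG_of_quad_of by blast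
  show "\<forall>Q\<in>compatible_quads p q \<tau>. quad_of p q \<tau> (pdCG_of_quad p \<tau> Q) = Q"
    using quad_of_pdCG_of_quad by (auto simp: compatible_quads_iff)
  show "quad_of p q \<tau> ` pdCGs p \<tau> \<subseteq> compatible_quads p q \<tau>"
    using quad_of_compatible by blast
  show "pdCG_of_quad p \<tau> ` compatible_quads p q \<tau> \<subseteq> pdCGs p \<tau>"
    using pdCG_of_quad_pdCG by (auto simp: compatible_quads_iff)
qed

end
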